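(* Let $\{\psi_i\}_{i=1}^N$ be a frame for $\mathbb{R}^d$ with analysis operator $\Psi$ and frame operator $S=\Psi^\top\Psi$, and let $\{\varphi_i\}_{i=1}^N$ be its canonical dual frame, $\varphi_i=S^{-1}\psi_i$. Then the set $\{(\varphi_i,\psi_i)\}_{i=1}^N$ is cyclically monotone.
   Context: A finite frame is a finite spanning set of $\mathbb{R}^d$; its analysis operator $\Psi\in\mathbb{R}^{N\times d}$ has rows $\psi_i^\top$. A set $S\subset\mathbb{R}^d\times\mathbb{R}^d$ is cyclically monotone if for every finite subset $\{(x_1,y_1),\dots,(x_n,y_n)\}\subset S$ and every permutation $\sigma$ of $\{1,\dots,n\}$, $\sum_i\langle x_i,y_i\rangle\ge\sum_i\langle x_i,y_{\sigma(i)}\rangle$. *)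

theory Defs
  imports "HOL-Analysis.Analysis" "HOL-Combinatorics.Permutations"
begin

definition cyclically_monotone :: "('a::real_inner \<times> 'a) set \<Rightarrow> bool" where
  "cyclically_monotone S \<longleftrightarrow>
     (\<forall>(n::nat) (p::nat \<Rightarrow> 'a \<times> 'a) \<sigma>.
        p ` {..<n} \<subseteq> S \<longrightarrow> inj_on p {..<n} \<longrightarrow> \<sigma> permutes {..<n} \<longrightarrow>
        (\<Sum>i<n. fst (p i) \<bullet> snd (p i)) \<ge> (\<Sum>i<n. fst (p i) \<bullet> snd (p (\<sigma> i))))"

text \<open>Frame operator S = Psi^T Psi = sum_i psi_i psi_i^T, where the analysis operator Psi has rows psi_i.\<close>
definition frame_operator :: "nat \<Rightarrow> (nat \<Rightarrow> real^'d) \<Rightarrow> real^'d^'d" where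
  "frame_operator N \<psi> = (\<Sum>i<N. (\<chi> j k. \<psi> i $ j * \<psi> i $ k))"

definition is_frame :: "nat \<Rightarrow> (nat \<Rightarrow> real^'d) \<Rightarrow> bool" where
  "is_frame N \<psi> \<longleftrightarrow> span (\<psi> ` {..<N}) = UNIV"

definition canonical_dual :: "nat \<Rightarrow> (nat \<Rightarrow> real^'d) \<Rightarrow> nat \<Rightarrow> real^'d" where
  "canonical_dual N \<psi> i = matrix_inv (frame_operator N \<psi>) *v \<psi> i"

end

theory Submission
  imports Defs
begin

text \<open>The frame operator S is self-adjoint and positive semidefinite, and for a frame it is
  invertible; hence so is B = S^-1, since \<open>x \<bullet> B x = B x \<bullet> S (B x) \<ge> 0\<close>. The canonical dual
  pairs are \<open>(B \<psi> i, \<psi> i)\<close>, so they lie on the graph of B, and for any self-adjoint positive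
  semidefinite B the identity
  \<open>2 (\<Sum>i. B y\<^sub>i \<bullet> y\<^sub>i - \<Sum>i. B y\<^sub>i \<bullet> y\<^sub>\<sigma>\<^sub>i) = \<Sum>i. (y\<^sub>i - y\<^sub>\<sigma>\<^sub>i) \<bullet> B (y\<^sub>i - y\<^sub>\<sigma>\<^sub>i) \<ge> 0\<close>
  shows that this graph is cyclically monotone.\<close>

lemma cyclically_monotone_subset:
  assumes "cyclically_monotone T" and "S \<subseteq> T"
  shows "cyclically_monotone S"
  using assms unfolding cyclically_monotone_def by (meson order_trans)

lemma self_adjoint_psd_sum_permute_le:
  fixes B :: "'a::real_inner \<Rightarrow> 'a"
  assumes lin: "linear B"
    and adj: "\<And>x y. x \<bullet> B y = B x \<bullet> y"
    and psd: "\<And>x. x \<bullet> B x \<ge> 0"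
    and perm: "\<sigma> permutes {..<n}"
  shows "(\<Sum>i<n. B (y i) \<bullet> y (\<sigma> i)) \<le> (\<Sum>i<n. B (y i) \<bullet> y i)"
proof -
  have permuted_diagonal: "(\<Sum>i<n. B (y (\<sigma> i)) \<bullet> y (\<sigma> i)) = (\<Sum>i<n. B (y i) \<bullet> y i)"
    using sum.permute[OF perm, of "\<lambda>i. B (y i) \<bullet> y i"] by (simp add: comp_def)
  have expand: "(y i - y (\<sigma> i)) \<bullet> B (y i - y (\<sigma> i)) =
      B (y i) \<bullet> y i - 2 * (B (y i) \<bullet> y (\<sigma> i)) + B (y (\<sigma> i)) \<bullet> y (\<sigma> i)" for i
    using adj[of "y i" "y (\<sigma> i)"] adj[of "y (\<sigma> i)" "y i"]
    by (simp add: linear_diff[OF lin] inner_diff_left inner_diff_right inner_commute)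
  have "0 \<le> (\<Sum>i<n. (y i - y (\<sigma> i)) \<bullet> B (y i - y (\<sigma> i)))"
    by (rule sum_nonneg) (simp add: psd)
  also have "\<dots> = 2 * (\<Sum>i<n. B (y i) \<bullet> y i) - 2 * (\<Sum>i<n. B (y i) \<bullet> y (\<sigma> i))"
    by (simp add: expand sum.distrib sum_subtractf permuted_diagonal sum_distrib_left)
  finally show ?thesis by simp
qed

lemma cyclically_monotone_self_adjoint_psd_graph:
  fixes B :: "'a::real_inner \<Rightarrow> 'a"
  assumes "linear B" and "\<And>x y. x \<bullet> B y = B x \<bullet> y" and "\<And>x. x \<bullet> B x \<ge> 0"
  shows "cyclically_monotone (range (\<lambda>y. (B y, y)))"
  unfolding cyclically_monotone_def
proof (intro allI impI)
  fix n and p :: "nat \<Rightarrow> 'a \<times> 'a" and \<sigma>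
  assume graph: "p ` {..<n} \<subseteq> range (\<lambda>y. (B y, y))" and "inj_on p {..<n}"
    and perm: "\<sigma> permutes {..<n}"
  have on_graph: "fst (p i) = B (snd (p i))" if "i < n" for i
    using graph that by auto
  have "(\<Sum>i<n. fst (p i) \<bullet> snd (p (\<sigma> i))) = (\<Sum>i<n. B (snd (p i)) \<bullet> snd (p (\<sigma> i)))"
    by (simp add: on_graph)
  also have "\<dots> \<le> (\<Sum>i<n. B (snd (p i)) \<bullet> snd (p i))"
    by (rule self_adjoint_psd_sum_permute_le[OF assms perm])
  also have "\<dots> = (\<Sum>i<n. fst (p i) \<bullet> snd (p i))"
    by (simp add: on_graph)
  finally show "(\<Sum>i<n. fst (p i) \<bullet> snd (p (\<sigma> i))) \<le> (\<Sum>i<n. fst (p i) \<bullet> snd (p i))" .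
qed

lemma matrix_mul_matrix_inv:
  fixes A :: "'a::field^'n^'n"
  assumes "invertible A"
  shows "A ** matrix_inv A = mat 1"
  using assms unfolding matrix_inv_def invertible_def
  by (rule someI_ex[where P = "\<lambda>A'. A ** A' = mat 1 \<and> A' ** A = mat 1", THEN conjunct1])

lemma matrix_vector_mul_matrix_inv:
  fixes A :: "'a::field^'n^'n"
  assumes "invertible A"
  shows "A *v (matrix_inv A *v x) = x"
  by (simp add: matrix_vector_mul_assoc matrix_mul_matrix_inv[OF assms])

lemma self_adjoint_matrix_inv:
  fixes A :: "real^'n^'n"
  assumes "invertible A" and adj: "\<And>x y. x \<bullet> (A *v y) = (A *v x) \<bullet> y"
  shows "x \<bullet> (matrix_inv A *v y) = (matrix_inv A *v x) \<bullet> y"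
proof -
  have "x \<bullet> (matrix_inv A *v y) = (A *v (matrix_inv A *v x)) \<bullet> (matrix_inv A *v y)"
    by (simp add: matrix_vector_mul_matrix_inv[OF assms(1)])
  also have "\<dots> = (matrix_inv A *v x) \<bullet> (A *v (matrix_inv A *v y))"
    by (simp add: adj)
  finally show ?thesis
    by (simp add: matrix_vector_mul_matrix_inv[OF assms(1)])
qed

lemma psd_matrix_inv:
  fixes A :: "real^'n^'n"
  assumes "invertible A" and psd: "\<And>x. x \<bullet> (A *v x) \<ge> 0"
  shows "x \<bullet> (matrix_inv A *v x) \<ge> 0"
proof -
  have "x \<bullet> (matrix_inv A *v x) = (matrix_inv A *v x) \<bullet> (A *v (matrix_inv A *v x))"
    by (simp add: matrix_vector_mul_matrix_inv[OF assms(1)] inner_commute)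
  also have "\<dots> \<ge> 0"
    by (rule psd)
  finally show ?thesis .
qed

lemma frame_operator_mult_vec:
  fixes \<psi> :: "nat \<Rightarrow> real^'d"
  shows "frame_operator N \<psi> *v z = (\<Sum>i<N. (\<psi> i \<bullet> z) *\<^sub>R \<psi> i)"
proof -
  have "(frame_operator N \<psi> *v z) $ j = (\<Sum>i<N. (\<psi> i \<bullet> z) *\<^sub>R \<psi> i) $ j" for j
  proof -
    have "(frame_operator N \<psi> *v z) $ j = (\<Sum>k\<in>UNIV. (\<Sum>i<N. \<psi> i $ j * \<psi> i $ k) * z $ k)"
      by (simp add: matrix_vector_mult_def frame_operator_def sum_component)
    also have "\<dots> = (\<Sum>i<N. \<Sum>k\<in>UNIV. \<psi> i $ j * \<psi> i $ k * z $ k)"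
      by (simp add: sum_distrib_right sum.swap[of _ UNIV])
    also have "\<dots> = (\<Sum>i<N. (\<psi> i \<bullet> z) * \<psi> i $ j)"
      by (simp add: inner_vec_def sum_distrib_left sum_distrib_right mult_ac)
    finally show ?thesis by (simp add: sum_component)
  qed
  then show ?thesis by (simp add: vec_eq_iff)
qed

lemma frame_operator_self_adjoint:
  fixes \<psi> :: "nat \<Rightarrow> real^'d"
  shows "x \<bullet> (frame_operator N \<psi> *v y) = (frame_operator N \<psi> *v x) \<bullet> y"
  by (simp add: frame_operator_mult_vec inner_sum_left inner_sum_right mult.commute inner_commute)

lemma frame_operator_quadratic_form:
  fixes \<psi> :: "nat \<Rightarrow> real^'d"
  shows "z \<bullet> (frame_operator N \<psi> *v z) = (\<Sum>i<N. (\<psi> i \<bullet> z)\<^sup>2)"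
  by (simp add: frame_operator_mult_vec inner_sum_right power2_eq_square inner_commute)

lemma frame_operator_psd:
  fixes \<psi> :: "nat \<Rightarrow> real^'d"
  shows "z \<bullet> (frame_operator N \<psi> *v z) \<ge> 0"
  by (simp add: frame_operator_quadratic_form sum_nonneg)

lemma invertible_frame_operator:
  fixes \<psi> :: "nat \<Rightarrow> real^'d"
  assumes "is_frame N \<psi>"
  shows "invertible (frame_operator N \<psi>)"
proof -
  have "z = 0" if "frame_operator N \<psi> *v z = 0" for z
  proof -
    have "(\<Sum>i<N. (\<psi> i \<bullet> z)\<^sup>2) = 0"
      using frame_operator_quadratic_form[of z N \<psi>] that by simp
    then have orthogonal: "\<forall>i\<in>{..<N}. \<psi> i \<bullet> z = 0"
      by (simp add: sum_nonneg_eq_0_iff)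
    have "span (\<psi> ` {..<N}) \<subseteq> {x. x \<bullet> z = 0}"
      by (rule span_minimal) (use orthogonal in \<open>auto simp: subspace_def inner_add_left\<close>)
    then have "z \<bullet> z = 0"
      using assms by (auto simp: is_frame_def subset_iff)
    then show ?thesis by simp
  qed
  then show ?thesis
    using matrix_left_invertible_ker invertible_left_inverse by metis
qed

theorem mainTheorem6:
  fixes N :: nat and \<psi> :: "nat \<Rightarrow> real^'d"
  assumes "is_frame N \<psi>"
  shows "cyclically_monotone ((\<lambda>i. (canonical_dual N \<psi> i, \<psi> i)) ` {..<N})"
proof -
  define S where "S = frame_operator N \<psi>"
  have inv: "invertible S"
    unfolding S_def using assms by (rule invertible_frame_operator)
  have "cyclically_monotone (range (\<lambda>y. (matrix_inv S *v y, y)))"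
  proof (rule cyclically_monotone_self_adjoint_psd_graph)
    show "x \<bullet> (matrix_inv S *v y) = (matrix_inv S *v x) \<bullet> y" for x y
      by (rule self_adjoint_matrix_inv[OF inv]) (simp add: S_def frame_operator_self_adjoint)
    show "x \<bullet> (matrix_inv S *v x) \<ge> 0" for x
      by (rule psd_matrix_inv[OF inv]) (simp add: S_def frame_operator_psd)
  qed (rule matrix_vector_mul_linear)
  then show ?thesis
    by (rule cyclically_monotone_subset) (auto simp: canonical_dual_def S_def)
qed

end
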